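(* Assume [LJ1]–[LJ4]. Then $B(\theta,\gamma)\le B_{BJ}(\theta)\le B(\theta,\gamma)+B_{IJ}$ for every $\theta>0$, and $B_{IJ}>0$. Moreover, if $\theta>0$ is such that there exists $\eta_\theta>0$ with $\frac12J_1(\gamma)+J_2\big(\frac{t+\gamma}{2}\big)\le0$ for all $t\in\mathbb R$ with $J_1(t)<J_1(\theta)+2\eta_\theta$, then $B(\theta,\gamma)<B_{BJ}(\theta)$.
   Context: Potentials: $J_1,J_2:\mathbb R\to(-\infty,+\infty]$; $J_{CB}:=J_1+J_2$; $J_0(z):=J_2(z)+\frac12\inf\{J_1(z_1)+J_1(z_2):z_1+z_2=2z\}$; $J_0^{**}$ is the convex lower semicontinuous envelope of $J_0$. Hypotheses: [LJ1] $\{z:J_0(z)=J_0^{**}(z)\}\cap\{z:J_0\text{ is affine in a neighbourhood of }z\}=\emptyset$. [LJ2] for every $z$ with $J_0(z)=J_0^{**}(z)$, the set $\{(z_1,z_2):z_1+z_2=2z,\ J_0(z)=J_2(z)+\frac12(J_1(z_1)+J_1(z_2))\}$ has exactly one element. [LJ3] $J_1,J_2$ are $C^{1,\alpha}$ on their domains for some $0<\alpha\le1$, $J_0$ is $C^1$ on its domain, $\operatorname{dom}J_1=\operatorname{dom}J_2\supset(0,+\infty)$, $\lim_{z\to+\infty}J_j(z)=0$ ($j=1,2$) and $\lim_{z\to+\infty}J_0(z)=:J_0(+\infty)\in\mathbb R$. [LJ4] there is a convex $\Psi:\mathbb R\to[0,+\infty]$ with $\lim_{z\to-\infty}\Psi(z)/|z|=+\infty$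 and constants $c_1,c_2>0$ with $c_1(\Psi(z)-1)\le J_j(z)\le c_2\max\{\Psi(z),|z|\}$ for all $z\in\mathbb R$, $j=1,2$; there are $\delta_1,\delta_2,\gamma>0$ with $\{\delta_j\}=\operatorname{argmin}J_j$ and $\{\gamma\}=\operatorname{argmin}J_0$; $J_j$ is strictly convex on $(-\infty,\delta_j)\cap\operatorname{dom}J_j$; $J_0(\gamma)<J_0(+\infty)$; and $J_0(z)=J_0^{**}(z)$ for all $z\le\gamma$. Boundary layer energies (with $\mathbb N=\{0,1,2,\dots\}$): for $\theta>0$, $B(\theta,\gamma):=\inf_{N\in\mathbb N}\min\{\frac12J_1(v^1-v^0)+\sum_{i\ge0}[J_2(\frac{v^{i+2}-v^i}{2})+\frac12J_1(v^{i+2}-v^{i+1})+\frac12J_1(v^{i+1}-v^i)-J_0(\gamma)]:v:\mathbb N\to\mathbb R,\ v^0=0,\ v^1=\theta,\ v^{i+1}-v^i=\gamma\ \forall i\ge N\}$; $B_b(\theta):=\inf_{k\in\mathbb N}\min\{\frac12J_1(v^1-v^0)+\sum_{i=0}^{k-1}[J_2(\frac{v^{i+2}-v^i}{2})+\frac12J_1(v^{i+2}-v^{i+1})+\frac12J_1(v^{i+1}-v^i)-J_0(\gamma)]:v^{k+1}=0,\ v^{k+1}-v^k=\theta\}$; $B(\gamma):=\inf_{N\in\mathbb N}\min\{\frac12J_1(v^1-v^0)+\sum_{i\ge0}[J_2(\frac{v^{i+2}-v^i}{2})+\frac12J_1(v^{i+2}-v^{i+1})+\frac12J_1(v^{i+1}-v^i)-J_0(\gamma)]:v:\mathbb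 N\to\mathbb R,\ v^0=0,\ v^{i+1}-v^i=\gamma\ \forall i\ge N\}$; $B_{BJ}(\theta):=\frac12J_1(\theta)+B_b(\theta)+B(\gamma)-2J_0(\gamma)$; $B_{IJ}:=2B(\gamma)-2J_0(\gamma)$. *)

theory Defs
  imports Complex_Main "HOL-Library.Extended_Real"
begin

(* Potentials are extended-real valued, J :: real \<Rightarrow> ereal, never -\<infinity>. *)

definition edom :: "(real \<Rightarrow> ereal) \<Rightarrow> real set" where
  "edom J = {z. J z < \<infinity>}"

definition J0 :: "(real \<Rightarrow> ereal) \<Rightarrow> (real \<Rightarrow> ereal) \<Rightarrow> real \<Rightarrow> ereal" where
  "J0 J1 J2 z = J2 z + ereal (1/2) * Inf {J1 z1 + J1 z2 | z1 z2. z1 + z2 = 2 * z}"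

definition conj :: "(real \<Rightarrow> ereal) \<Rightarrow> real \<Rightarrow> ereal" where
  "conj f p = (SUP z. ereal (p * z) - f z)"

definition biconj :: "(real \<Rightarrow> ereal) \<Rightarrow> real \<Rightarrow> ereal" where
  "biconj f z = (SUP p. ereal (p * z) - conj f p)"

definition locally_affine_at :: "(real \<Rightarrow> ereal) \<Rightarrow> real \<Rightarrow> bool" where
  "locally_affine_at f z \<longleftrightarrow>
     (\<exists>e>0. \<exists>a b. \<forall>y. \<bar>y - z\<bar> < e \<longrightarrow> f y = ereal (a * y + b))"

definition C1alpha_on_dom :: "real \<Rightarrow> (real \<Rightarrow> ereal) \<Rightarrow> bool" where
  "C1alpha_on_dom \<alpha> J \<longleftrightarrow>
     (\<exists>J'. (\<forall>x\<in>edom J. ((\<lambda>y. real_of_ereal (J y)) has_real_derivative J' x) (at x within edom J))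
        \<and> (\<forall>K. compact K \<and> K \<subseteq> edom J \<longrightarrow>
              (\<exists>L. \<forall>x\<in>K. \<forall>y\<in>K. \<bar>J' x - J' y\<bar> \<le> L * \<bar>x - y\<bar> powr \<alpha>)))"

definition C1_on_dom :: "(real \<Rightarrow> ereal) \<Rightarrow> bool" where
  "C1_on_dom J \<longleftrightarrow>
     (\<exists>J'. (\<forall>x\<in>edom J. ((\<lambda>y. real_of_ereal (J y)) has_real_derivative J' x) (at x within edom J))
        \<and> continuous_on (edom J) J')"

definition ereal_convex :: "(real \<Rightarrow> ereal) \<Rightarrow> bool" where
  "ereal_convex f \<longleftrightarrow> (\<forall>x y t. 0 \<le> t \<and> t \<le> 1 \<longrightarrow>
      f ((1 - t) * x + t * y) \<le> ereal (1 - t) * f x + ereal t * f y)"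

definition strictly_convex_on_set :: "real set \<Rightarrow> (real \<Rightarrow> ereal) \<Rightarrow> bool" where
  "strictly_convex_on_set S f \<longleftrightarrow> (\<forall>x\<in>S. \<forall>y\<in>S. \<forall>t. x \<noteq> y \<and> 0 < t \<and> t < 1 \<longrightarrow>
      f ((1 - t) * x + t * y) < ereal (1 - t) * f x + ereal t * f y)"

definition cell :: "(real \<Rightarrow> ereal) \<Rightarrow> (real \<Rightarrow> ereal) \<Rightarrow> real \<Rightarrow> (nat \<Rightarrow> real) \<Rightarrow> nat \<Rightarrow> ereal" where
  "cell J1 J2 \<gamma> v i = J2 ((v (i+2) - v i) / 2) + ereal (1/2) * J1 (v (i+2) - v (i+1))
      + ereal (1/2) * J1 (v (i+1) - v i) - J0 J1 J2 \<gamma>"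

definition chain_energy :: "(real \<Rightarrow> ereal) \<Rightarrow> (real \<Rightarrow> ereal) \<Rightarrow> real \<Rightarrow> (nat \<Rightarrow> real) \<Rightarrow> ereal" where
  "chain_energy J1 J2 \<gamma> v = ereal (1/2) * J1 (v 1 - v 0) + lim (\<lambda>n. \<Sum>i<n. cell J1 J2 \<gamma> v i)"

definition Btg :: "(real \<Rightarrow> ereal) \<Rightarrow> (real \<Rightarrow> ereal) \<Rightarrow> real \<Rightarrow> real \<Rightarrow> ereal" where
  "Btg J1 J2 \<theta> \<gamma> = (INF v \<in> {v. \<exists>N::nat. v 0 = 0 \<and> v 1 = \<theta> \<and> (\<forall>i\<ge>N. v (i+1) - v i = \<gamma>)}.
       chain_energy J1 J2 \<gamma> v)"

definition Bg :: "(real \<Rightarrow> ereal) \<Rightarrow> (real \<Rightarrow> ereal) \<Rightarrow> real \<Rightarrow> ereal" where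
  "Bg J1 J2 \<gamma> = (INF v \<in> {v. \<exists>N::nat. v 0 = 0 \<and> (\<forall>i\<ge>N. v (i+1) - v i = \<gamma>)}.
       chain_energy J1 J2 \<gamma> v)"

definition Bb :: "(real \<Rightarrow> ereal) \<Rightarrow> (real \<Rightarrow> ereal) \<Rightarrow> real \<Rightarrow> real \<Rightarrow> ereal" where
  "Bb J1 J2 \<gamma> \<theta> = (INF kv \<in> {(k, v). v (Suc k) = 0 \<and> v (Suc k) - v k = \<theta>}.
       ereal (1/2) * J1 (snd kv 1 - snd kv 0) + (\<Sum>i<fst kv. cell J1 J2 \<gamma> (snd kv) i))"

definition BBJ :: "(real \<Rightarrow> ereal) \<Rightarrow> (real \<Rightarrow> ereal) \<Rightarrow> real \<Rightarrow> real \<Rightarrow> ereal" where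
  "BBJ J1 J2 \<gamma> \<theta> = ereal (1/2) * J1 \<theta> + Bb J1 J2 \<gamma> \<theta> + Bg J1 J2 \<gamma> - 2 * J0 J1 J2 \<gamma>"

definition BIJ :: "(real \<Rightarrow> ereal) \<Rightarrow> (real \<Rightarrow> ereal) \<Rightarrow> real \<Rightarrow> ereal" where
  "BIJ J1 J2 \<gamma> = 2 * Bg J1 J2 \<gamma> - 2 * J0 J1 J2 \<gamma>"

end

theory Submission
  imports Defs
begin

(* Write every cell energy through its two consecutive bond lengths a, b: the cell costs
   J2((a+b)/2) + J1(a)/2 + J1(b)/2 - J0(gamma).  Since J0(gamma) is the minimum of J0, every
   cell is nonnegative, and by [LJ2] and symmetry the optimal splitting of 2 gamma is (gamma,gamma),
   so a cell with both bonds equal to gamma costs nothing.  Hence the energy of a chain that is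
   eventually gamma-periodic is a finite partial sum, bounded below by min J1 / 2 > J0(gamma); the
   last inequality comes from J0(+oo) <= min J1 / 2 and [LJ4].

   The three estimates come from cut-and-paste constructions of competitors:
   - gluing a reflected boundary chain to a bulk chain across one long bond L gives
     B(theta,gamma) <= B_BJ(theta) in the limit L -> oo;
   - splitting a chain of B(theta,gamma) and a chain of B(gamma) at a common gamma-periodic
     position and joining them gives a competitor for B_b(theta), whence B_BJ <= B(theta,gamma)+B_IJ;
   - continuing a near-optimal boundary chain by bonds of length gamma saves the energy
     B(gamma) - J0(gamma) > 0 under the smallness condition on J2, giving the strict inequality. *)

definition pair_cell :: "(real \<Rightarrow> ereal) \<Rightarrow> (real \<Rightarrow> ereal) \<Rightarrow> real \<Rightarrow> real \<Rightarrow> real \<Rightarrow> ereal" where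
  "pair_cell J1 J2 \<gamma> a b =
     J2 ((a + b) / 2) + ereal (1/2) * J1 b + ereal (1/2) * J1 a - J0 J1 J2 \<gamma>"

lemma cell_pair_cell:
  "cell J1 J2 \<gamma> v i = pair_cell J1 J2 \<gamma> (v (i+1) - v i) (v (i+2) - v (i+1))"
proof -
  have "(v (i+1) - v i + (v (i+2) - v (i+1))) / 2 = (v (i+2) - v i) / 2" by simp
  then show ?thesis unfolding cell_def pair_cell_def by simp
qed

lemma pair_cell_swap: "pair_cell J1 J2 \<gamma> a b = pair_cell J1 J2 \<gamma> b a"
  unfolding pair_cell_def by (simp add: ac_simps)

lemma sum_lessThan_add:
  "(\<Sum>i<m + n. (f :: nat \<Rightarrow> 'a :: comm_monoid_add) i) = (\<Sum>i<m. f i) + (\<Sum>j<n. f (m + j))"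
  by (induct n) (simp_all add: add.assoc)

lemma sum_cell_shift:
  assumes "\<And>i. i \<le> n + 1 \<Longrightarrow> w (m + i) = x i + d"
  shows "(\<Sum>i<n. cell J1 J2 \<gamma> w (m + i)) = (\<Sum>i<n. cell J1 J2 \<gamma> x i)"
proof (rule sum.cong[OF refl])
  fix i assume "i \<in> {..<n}"
  then have "w (m + i + 1) - w (m + i) = x (i + 1) - x i"
    and "w (m + i + 2) - w (m + i + 1) = x (i + 2) - x (i + 1)"
    using assms[of i] assms[of "i + 1"] assms[of "i + 2"] by (simp_all add: add.assoc)
  then show "cell J1 J2 \<gamma> w (m + i) = cell J1 J2 \<gamma> x i"
    by (simp only: cell_pair_cell)
qed

lemma sum_cell_reflect:
  assumes "\<And>i. i \<le> n + 1 \<Longrightarrow> w (m + i) = - x (n + 1 - i)"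
  shows "(\<Sum>i<n. cell J1 J2 \<gamma> w (m + i)) = (\<Sum>i<n. cell J1 J2 \<gamma> x i)"
proof -
  have "cell J1 J2 \<gamma> w (m + i) = cell J1 J2 \<gamma> x (n - Suc i)" if "i < n" for i
  proof -
    define j where "j = n - Suc i"
    have idx: "n + 1 - i = j + 2" "n + 1 - (i + 1) = j + 1" "n + 1 - (i + 2) = j"
      using that by (simp_all add: j_def)
    have "w (m + i + 1) - w (m + i) = x (j + 2) - x (j + 1)"
      and "w (m + i + 2) - w (m + i + 1) = x (j + 1) - x j"
      using assms[of i] assms[of "i + 1"] assms[of "i + 2"] that idx by (simp_all add: add.assoc)
    then have "cell J1 J2 \<gamma> w (m + i) = pair_cell J1 J2 \<gamma> (x (j + 2) - x (j + 1)) (x (j + 1) - x j)"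
      by (simp only: cell_pair_cell)
    also have "\<dots> = cell J1 J2 \<gamma> x j"
      by (simp only: cell_pair_cell pair_cell_swap[of _ _ _ "x (j + 2) - x (j + 1)"] add.assoc
          one_add_one)
    finally show ?thesis by (simp add: j_def)
  qed
  then have "(\<Sum>i<n. cell J1 J2 \<gamma> w (m + i)) = (\<Sum>i<n. cell J1 J2 \<gamma> x (n - Suc i))" by simp
  also have "\<dots> = (\<Sum>i<n. cell J1 J2 \<gamma> x i)" by (rule sum.nat_diff_reindex)
  finally show ?thesis .
qed

definition partial_energy :: "(real \<Rightarrow> ereal) \<Rightarrow> (real \<Rightarrow> ereal) \<Rightarrow> real \<Rightarrow> nat \<Rightarrow> (nat \<Rightarrow> real) \<Rightarrow> ereal" where
  "partial_energy J1 J2 \<gamma> k v = ereal (1/2) * J1 (v 1 - v 0) + (\<Sum>i<k. cell J1 J2 \<gamma> v i)"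

lemma Bb_partial_energy:
  "Bb J1 J2 \<gamma> \<theta> = (INF (k, v) \<in> {(k, v). v (Suc k) = 0 \<and> v (Suc k) - v k = \<theta>}. partial_energy J1 J2 \<gamma> k v)"
  unfolding Bb_def partial_energy_def by (simp add: case_prod_beta)

definition uniform_chain :: "real \<Rightarrow> nat \<Rightarrow> real" where
  "uniform_chain \<gamma> i = real i * \<gamma>"

lemma uniform_chain_start: "uniform_chain \<gamma> 0 = 0" "uniform_chain \<gamma> 1 - uniform_chain \<gamma> 0 = \<gamma>"
  by (simp_all add: uniform_chain_def)

lemma uniform_chain_tail: "\<forall>i\<ge>0. uniform_chain \<gamma> (i + 1) - uniform_chain \<gamma> i = \<gamma>"
  by (simp add: uniform_chain_def algebra_simps)

(* The reflection of a boundary chain x (of length k+1, ending at 0), followed by a bond of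
   length L and a translated copy of the chain u. *)
definition glue_chain :: "nat \<Rightarrow> (nat \<Rightarrow> real) \<Rightarrow> real \<Rightarrow> (nat \<Rightarrow> real) \<Rightarrow> nat \<Rightarrow> real" where
  "glue_chain k x L u i = (if i \<le> k + 1 then - x (k + 1 - i) else L - x 0 + u (i - (k + 2)))"

lemma glue_chain_start:
  assumes "x (Suc k) = 0" "x (Suc k) - x k = \<theta>"
  shows "glue_chain k x L u 0 = 0" "glue_chain k x L u 1 = \<theta>"
  using assms by (simp_all add: glue_chain_def)

lemma glue_chain_tail:
  assumes "\<forall>i\<ge>N. u (i + 1) - u i = \<gamma>"
  shows "\<forall>i\<ge>k + 2 + N. glue_chain k x L u (i + 1) - glue_chain k x L u i = \<gamma>"
proof (intro allI impI)
  fix i assume i: "k + 2 + N \<le> i"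
  then have "i + 1 - (k + 2) = i - (k + 2) + 1" by arith
  then show "glue_chain k x L u (i + 1) - glue_chain k x L u i = \<gamma>"
    using assms i by (simp add: glue_chain_def)
qed

lemma glue_chain_cells:
  assumes "u 0 = 0"
  shows "(\<Sum>i<k + 2 + n. cell J1 J2 \<gamma> (glue_chain k x L u) i)
    = (\<Sum>i<k. cell J1 J2 \<gamma> x i) + pair_cell J1 J2 \<gamma> (x 1 - x 0) L
      + pair_cell J1 J2 \<gamma> L (u 1 - u 0) + (\<Sum>j<n. cell J1 J2 \<gamma> u j)"
proof -
  let ?z = "glue_chain k x L u"
  have left: "(\<Sum>i<k. cell J1 J2 \<gamma> ?z (0 + i)) = (\<Sum>i<k. cell J1 J2 \<gamma> x i)"
    by (rule sum_cell_reflect) (simp add: glue_chain_def)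
  have right: "(\<Sum>j<n. cell J1 J2 \<gamma> ?z (k + 2 + j)) = (\<Sum>j<n. cell J1 J2 \<gamma> u j)"
    by (rule sum_cell_shift[where d = "L - x 0"]) (simp add: glue_chain_def)
  have bond1: "cell J1 J2 \<gamma> ?z k = pair_cell J1 J2 \<gamma> (x 1 - x 0) L"
    using assms by (simp add: cell_pair_cell glue_chain_def)
  have bond2: "cell J1 J2 \<gamma> ?z (k + 1) = pair_cell J1 J2 \<gamma> L (u 1 - u 0)"
  proof -
    have "k + 3 - (k + 2) = 1" by simp
    then show ?thesis using assms by (simp add: cell_pair_cell glue_chain_def)
  qed
  have "(\<Sum>i<k + 2 + n. cell J1 J2 \<gamma> ?z i)
      = (\<Sum>i<k + 2. cell J1 J2 \<gamma> ?z i) + (\<Sum>j<n. cell J1 J2 \<gamma> ?z (k + 2 + j))"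
    by (rule sum_lessThan_add)
  also have "(\<Sum>i<k + 2. cell J1 J2 \<gamma> ?z i)
      = (\<Sum>i<k. cell J1 J2 \<gamma> ?z (0 + i)) + cell J1 J2 \<gamma> ?z k + cell J1 J2 \<gamma> ?z (k + 1)"
    by (simp add: numeral_2_eq_2)
  finally show ?thesis by (simp only: left right bond1 bond2)
qed

(* The first P+1 points of u followed by the reflection of the first P+1 points of v;
   this is a boundary chain ending in the reflection of v 0. *)
definition join_chain :: "nat \<Rightarrow> (nat \<Rightarrow> real) \<Rightarrow> (nat \<Rightarrow> real) \<Rightarrow> nat \<Rightarrow> real" where
  "join_chain P u v i = (if i \<le> P then u i - u P - v (P + 1) else - v (2 * P + 1 - i))"

(* If u and v have the same bond at position P, joining them there loses no energy. *)
lemma join_chain_properties: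
  assumes match: "u (P + 1) - u P = v (P + 1) - v P"
  shows "join_chain P u v (Suc (2 * P)) = - v 0"
    and "join_chain P u v (Suc (2 * P)) - join_chain P u v (2 * P) = v 1 - v 0"
    and "partial_energy J1 J2 \<gamma> (2 * P) (join_chain P u v)
      = ereal (1/2) * J1 (u 1 - u 0) + ((\<Sum>i<P. cell J1 J2 \<gamma> u i) + (\<Sum>i<P. cell J1 J2 \<gamma> v i))"
proof -
  let ?x = "join_chain P u v"
  have left: "?x (0 + i) = u i + (- u P - v (P + 1))" if "i \<le> P + 1" for i
    using that match by (cases "i = P + 1") (auto simp: join_chain_def)
  have right: "?x (P + i) = - v (P + 1 - i)" if "i \<le> P + 1" for i
    using that by (cases "i = 0") (auto simp: join_chain_def)
  show "?x (Suc (2 * P)) = - v 0" using right[of "P + 1"] by (simp add: mult_2)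
  show "?x (Suc (2 * P)) - ?x (2 * P) = v 1 - v 0"
    using right[of "P + 1"] right[of P] by (simp add: mult_2)
  have "?x 1 - ?x 0 = u 1 - u 0" using left[of 0] left[of 1] by simp
  moreover have "(\<Sum>i<2 * P. cell J1 J2 \<gamma> ?x i)
      = (\<Sum>i<P. cell J1 J2 \<gamma> ?x (0 + i)) + (\<Sum>i<P. cell J1 J2 \<gamma> ?x (P + i))"
    using sum_lessThan_add[of "cell J1 J2 \<gamma> ?x" P P] by (simp add: mult_2)
  moreover have "(\<Sum>i<P. cell J1 J2 \<gamma> ?x (0 + i)) = (\<Sum>i<P. cell J1 J2 \<gamma> u i)"
    by (rule sum_cell_shift) (rule left)
  moreover have "(\<Sum>i<P. cell J1 J2 \<gamma> ?x (P + i)) = (\<Sum>i<P. cell J1 J2 \<gamma> v i)"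
    by (rule sum_cell_reflect) (rule right)
  ultimately show "partial_energy J1 J2 \<gamma> (2 * P) ?x
      = ereal (1/2) * J1 (u 1 - u 0) + ((\<Sum>i<P. cell J1 J2 \<gamma> u i) + (\<Sum>i<P. cell J1 J2 \<gamma> v i))"
    by (simp add: partial_energy_def)
qed

lemma J0_le_split:
  "J0 J1 J2 ((a + b) / 2) \<le> J2 ((a + b) / 2) + ereal (1/2) * (J1 a + J1 b)"
proof -
  have "a + b = 2 * ((a + b) / 2)" by simp
  then have "J1 a + J1 b \<in> {J1 z1 + J1 z2 | z1 z2. z1 + z2 = 2 * ((a + b) / 2)}" by blast
  then have "Inf {J1 z1 + J1 z2 | z1 z2. z1 + z2 = 2 * ((a + b) / 2)} \<le> J1 a + J1 b"
    by (rule Inf_lower)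
  then show ?thesis unfolding J0_def by (intro add_left_mono ereal_mult_left_mono) simp_all
qed

(* A unique optimal splitting must be symmetric, i.e. both bonds equal z. *)
lemma J0_unique_split_diagonal:
  assumes "\<exists>!p. fst p + snd p = 2 * z \<and> J0 J1 J2 z = J2 z + ereal (1/2) * (J1 (fst p) + J1 (snd p))"
  shows "J0 J1 J2 z = J2 z + J1 z"
proof -
  obtain p where p: "fst p + snd p = 2 * z" "J0 J1 J2 z = J2 z + ereal (1/2) * (J1 (fst p) + J1 (snd p))"
    and unique: "\<And>q. fst q + snd q = 2 * z \<and> J0 J1 J2 z = J2 z + ereal (1/2) * (J1 (fst q) + J1 (snd q))
      \<Longrightarrow> q = p"
    using assms by metis
  have "(snd p, fst p) = p" by (rule unique) (use p in \<open>simp add: add.commute\<close>)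
  then have "fst p = snd p" by (metis fst_conv snd_conv)
  then have "fst p = z" "snd p = z" using p(1) by simp_all
  moreover have "ereal (1/2) * (J1 z + J1 z) = J1 z" by (cases "J1 z") simp_all
  ultimately show ?thesis using p(2) by simp
qed

lemma filterlim_affine_at_top:
  assumes "0 < s"
  shows "filterlim (\<lambda>z::real. s * z + a) at_top at_top"
proof -
  have "filterlim (\<lambda>z::real. a + s * z) at_top at_top"
    by (rule filterlim_tendsto_add_at_top[OF tendsto_const],
        rule filterlim_tendsto_pos_mult_at_top[OF tendsto_const assms filterlim_ident])
  then show ?thesis by (simp add: add.commute)
qed

(* Splitting 2z as y + (2z - y) and letting z -> oo: J0 at infinity is at most J1(y)/2. *)
lemma J0_limit_le_half_J1:
  assumes J1_lim: "(J1 \<longlongrightarrow> 0) at_top" and J2_lim: "(J2 \<longlongrightarrow> 0) at_top"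
    and J0_lim: "(J0 J1 J2 \<longlongrightarrow> ereal l) at_top" and J1_y: "J1 y \<noteq> -\<infinity>"
  shows "ereal l \<le> ereal (1/2) * J1 y"
proof (cases "J1 y")
  case (real r)
  have "((\<lambda>z. J1 (2 * z + - y)) \<longlongrightarrow> 0) at_top"
    by (rule filterlim_compose[OF J1_lim filterlim_affine_at_top]) simp
  then have lim: "((\<lambda>z. J2 z + ereal (1/2) * (J1 y + J1 (2 * z + - y))) \<longlongrightarrow>
      0 + ereal (1/2) * (ereal r + 0)) at_top"
    unfolding real by (intro tendsto_add_ereal tendsto_cmult_ereal J2_lim tendsto_const) simp_all
  have bound: "J0 J1 J2 z \<le> J2 z + ereal (1/2) * (J1 y + J1 (2 * z + - y))" for z
    using J0_le_split[of J1 J2 y "2 * z + - y"] by simp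
  have "ereal l \<le> 0 + ereal (1/2) * (ereal r + 0)"
    by (rule tendsto_le[OF trivial_limit_at_top_linorder lim J0_lim]) (intro always_eventually allI bound)
  then show ?thesis using real by simp
qed (use J1_y in simp_all)

lemma le_INF_add_INF:
  fixes f :: "'a \<Rightarrow> ereal" and g :: "'b \<Rightarrow> ereal"
  assumes le: "\<And>x y. x \<in> X \<Longrightarrow> y \<in> Y \<Longrightarrow> a \<le> ereal d + f x + g y"
    and f_ge: "\<And>x. x \<in> X \<Longrightarrow> ereal b \<le> f x" and g_ge: "\<And>y. y \<in> Y \<Longrightarrow> ereal b \<le> g y"
  shows "a \<le> ereal d + (INF x\<in>X. f x) + (INF y\<in>Y. g y)"
proof (rule ereal_le_epsilon2)
  fix e :: real assume e: "0 < e"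
  have F_ge: "ereal b \<le> (INF x\<in>X. f x)" and G_ge: "ereal b \<le> (INF y\<in>Y. g y)"
    using f_ge g_ge by (auto intro: INF_greatest)
  show "a \<le> ereal d + (INF x\<in>X. f x) + (INF y\<in>Y. g y) + ereal e"
  proof (cases "(INF x\<in>X. f x) = \<infinity> \<or> (INF y\<in>Y. g y) = \<infinity>")
    case True
    then show ?thesis using F_ge G_ge by auto
  next
    case False
    then obtain F G where F: "(INF x\<in>X. f x) = ereal F" and G: "(INF y\<in>Y. g y) = ereal G"
      using F_ge G_ge by (cases "INF x\<in>X. f x"; cases "INF y\<in>Y. g y") auto
    have "(INF x\<in>X. f x) < ereal (F + e/2)" "(INF y\<in>Y. g y) < ereal (G + e/2)"
      using F G e by simp_all
    then obtain x y where x: "x \<in> X" "f x < ereal (F + e/2)" and y: "y \<in> Y" "g y < ereal (G + e/2)"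
      by (auto simp: INF_less_iff)
    have "a \<le> ereal d + f x + g y" using le x y by blast
    also have "\<dots> \<le> ereal d + ereal (F + e/2) + ereal (G + e/2)"
      using x y by (intro add_mono order.refl less_imp_le)
    also have "\<dots> = ereal d + (INF x\<in>X. f x) + (INF y\<in>Y. g y) + ereal e"
      using F G by simp
    finally show ?thesis .
  qed
qed

lemma ereal_add_finite_parts:
  fixes a b :: ereal
  assumes "a \<noteq> -\<infinity>" "b \<noteq> -\<infinity>" "a + b \<noteq> \<infinity>"
  obtains ra rb where "a = ereal ra" "b = ereal rb"
  using assms by (cases a; cases b) auto

lemma ereal_bounded_above:
  fixes x :: ereal
  assumes "x \<noteq> -\<infinity>" "x < ereal r"
  obtains y where "x = ereal y" "y < r"
  using assms by (cases x) auto

locale boundary_setting =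
  fixes J1 J2 :: "real \<Rightarrow> ereal" and \<gamma> m :: real
  assumes J1_ge: "\<And>z. ereal m \<le> J1 z"
    and J2_not_minf: "\<And>z. J2 z \<noteq> -\<infinity>"
    and J1_finite: "\<And>z. 0 < z \<Longrightarrow> J1 z \<noteq> \<infinity>"
    and J0_gamma: "J0 J1 J2 \<gamma> = J2 \<gamma> + J1 \<gamma>"
    and J0_gamma_min: "\<And>z. J0 J1 J2 \<gamma> \<le> J0 J1 J2 z"
    and J0_gamma_gap: "J0 J1 J2 \<gamma> < ereal (m / 2)"
    and J1_lim: "(J1 \<longlongrightarrow> 0) at_top" and J2_lim: "(J2 \<longlongrightarrow> 0) at_top"
begin

lemma J1_not_minf: "J1 z \<noteq> -\<infinity>"
  using J1_ge[of z] by auto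

lemma gamma_values_finite:
  obtains j1 j2 where "J1 \<gamma> = ereal j1" "J2 \<gamma> = ereal j2"
proof -
  have "J2 \<gamma> + J1 \<gamma> \<noteq> \<infinity>" using J0_gamma J0_gamma_gap by auto
  then show ?thesis using that J1_not_minf J2_not_minf ereal_add_finite_parts by metis
qed

definition bulk :: real where "bulk = real_of_ereal (J0 J1 J2 \<gamma>)"

lemma J0_gamma_eq: "J0 J1 J2 \<gamma> = ereal bulk"
proof -
  obtain j1 j2 where "J1 \<gamma> = ereal j1" "J2 \<gamma> = ereal j2" by (rule gamma_values_finite)
  then show ?thesis using J0_gamma by (simp add: bulk_def)
qed

lemma bulk_less: "bulk < m / 2"
  using J0_gamma_gap by (simp add: J0_gamma_eq)

lemma pair_cell_gamma: "pair_cell J1 J2 \<gamma> \<gamma> \<gamma> = 0"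
proof -
  obtain j1 j2 where "J1 \<gamma> = ereal j1" "J2 \<gamma> = ereal j2" by (rule gamma_values_finite)
  then show ?thesis using J0_gamma by (simp add: pair_cell_def)
qed

(* Every cell costs at least the bulk energy, by minimality of J0 at gamma. *)
lemma pair_cell_nonneg: "0 \<le> pair_cell J1 J2 \<gamma> a b"
proof -
  have "ereal bulk \<le> J0 J1 J2 ((a + b) / 2)" using J0_gamma_min by (simp add: J0_gamma_eq[symmetric])
  also have "\<dots> \<le> J2 ((a + b) / 2) + ereal (1/2) * (J1 a + J1 b)" by (rule J0_le_split)
  also have "ereal (1/2) * (J1 a + J1 b) = ereal (1/2) * J1 b + ereal (1/2) * J1 a"
    using J1_not_minf[of a] J1_not_minf[of b] by (cases "J1 a"; cases "J1 b") auto
  finally have "ereal bulk \<le> J2 ((a + b) / 2) + ereal (1/2) * J1 b + ereal (1/2) * J1 a"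
    by (simp add: add.assoc)
  then show ?thesis unfolding pair_cell_def J0_gamma_eq
    by (cases "J2 ((a + b) / 2) + ereal (1/2) * J1 b + ereal (1/2) * J1 a") auto
qed

lemma sum_cells_nonneg: "0 \<le> (\<Sum>i<n. cell J1 J2 \<gamma> v i)"
  by (simp add: sum_nonneg cell_pair_cell pair_cell_nonneg)

(* Once a chain is gamma-periodic its remaining cells vanish, so its energy is a partial energy. *)
lemma chain_energy_tail:
  assumes tail: "\<forall>i\<ge>N. v (i + 1) - v i = \<gamma>" and "N \<le> n"
  shows "chain_energy J1 J2 \<gamma> v = partial_energy J1 J2 \<gamma> n v"
proof -
  have zero: "cell J1 J2 \<gamma> v i = 0" if "N \<le> i" for i
    using tail that pair_cell_gamma by (simp add: cell_pair_cell)
  have const: "(\<Sum>i<n'. cell J1 J2 \<gamma> v i) = (\<Sum>i<n. cell J1 J2 \<gamma> v i)" if "n \<le> n'" for n'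
    using that by (induct n' rule: dec_induct) (use \<open>N \<le> n\<close> zero in auto)
  have "(\<lambda>n'. \<Sum>i<n'. cell J1 J2 \<gamma> v i) \<longlonglongrightarrow> (\<Sum>i<n. cell J1 J2 \<gamma> v i)"
    by (rule tendsto_eventually) (auto simp: eventually_at_top_linorder intro!: exI[of _ n] const)
  then show ?thesis unfolding chain_energy_def partial_energy_def by (simp add: limI)
qed

lemma half_J1_ge: "ereal (m / 2) \<le> ereal (1/2) * J1 z"
  using ereal_mult_left_mono[OF J1_ge[of z], of "ereal (1/2)"] by simp

lemma partial_energy_finite_parts:
  assumes "partial_energy J1 J2 \<gamma> k v \<noteq> \<infinity>"
  obtains r s where "ereal (1/2) * J1 (v 1 - v 0) = ereal r" "(\<Sum>i<k. cell J1 J2 \<gamma> v i) = ereal s"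
    "0 \<le> s"
proof -
  have "ereal (1/2) * J1 (v 1 - v 0) \<noteq> -\<infinity>" using half_J1_ge[of "v 1 - v 0"] by auto
  moreover have "(\<Sum>i<k. cell J1 J2 \<gamma> v i) \<noteq> -\<infinity>" using sum_cells_nonneg[of v k] by auto
  ultimately show ?thesis
    using assms that sum_cells_nonneg[of v k] unfolding partial_energy_def
    by (metis ereal_add_finite_parts ereal_less_eq(5))
qed

lemma partial_energy_ge: "ereal (m / 2) \<le> partial_energy J1 J2 \<gamma> k v"
  unfolding partial_energy_def by (rule add_increasing2[OF sum_cells_nonneg half_J1_ge])

lemma chain_energy_ge:
  "\<forall>i\<ge>N. v (i + 1) - v i = \<gamma> \<Longrightarrow> ereal (m / 2) \<le> chain_energy J1 J2 \<gamma> v"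
  using chain_energy_tail partial_energy_ge by (metis order_refl)

lemma glue_chain_energy:
  assumes "x (Suc k) = 0" "x (Suc k) - x k = \<theta>" "u 0 = 0" "\<forall>i\<ge>N. u (i + 1) - u i = \<gamma>"
  shows "chain_energy J1 J2 \<gamma> (glue_chain k x L u) = ereal (1/2) * J1 \<theta> +
    ((\<Sum>i<k. cell J1 J2 \<gamma> x i) + pair_cell J1 J2 \<gamma> (x 1 - x 0) L
      + pair_cell J1 J2 \<gamma> L (u 1 - u 0) + (\<Sum>j<N. cell J1 J2 \<gamma> u j))"
  using chain_energy_tail[OF glue_chain_tail[of N u, OF assms(4)] order_refl]
    glue_chain_cells[of u, OF assms(3)] glue_chain_start[OF assms(1,2)]
  by (simp add: partial_energy_def)

lemma Bg_bounds: "ereal (m / 2) \<le> Bg J1 J2 \<gamma>" "Bg J1 J2 \<gamma> \<le> ereal (1/2) * J1 \<gamma>"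
proof -
  show "ereal (m / 2) \<le> Bg J1 J2 \<gamma>"
    unfolding Bg_def by (rule INF_greatest) (blast intro: chain_energy_ge)
  have "Bg J1 J2 \<gamma> \<le> chain_energy J1 J2 \<gamma> (uniform_chain \<gamma>)"
    unfolding Bg_def using uniform_chain_start uniform_chain_tail by (intro INF_lower) blast
  also have "\<dots> = ereal (1/2) * J1 \<gamma>"
    using chain_energy_tail[OF uniform_chain_tail order_refl] uniform_chain_start
    by (simp add: partial_energy_def)
  finally show "Bg J1 J2 \<gamma> \<le> ereal (1/2) * J1 \<gamma>" .
qed

lemma Bg_finite:
  obtains bg where "Bg J1 J2 \<gamma> = ereal bg" "m / 2 \<le> bg"
proof -
  obtain j1 j2 where "J1 \<gamma> = ereal j1" "J2 \<gamma> = ereal j2" by (rule gamma_values_finite)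
  then show ?thesis using that Bg_bounds by (cases "Bg J1 J2 \<gamma>") auto
qed

lemma BIJ_pos: "0 < BIJ J1 J2 \<gamma>"
proof -
  obtain bg where "Bg J1 J2 \<gamma> = ereal bg" "m / 2 \<le> bg" by (rule Bg_finite)
  then show ?thesis using bulk_less by (simp add: BIJ_def J0_gamma_eq)
qed

(* B_b(theta) is finite (it is at least m/2) and at most the energy J1(theta)/2 of a single bond. *)
lemma Bb_bounds:
  assumes "0 < \<theta>"
  obtains bb where "Bb J1 J2 \<gamma> \<theta> = ereal bb" "ereal bb \<le> ereal (1/2) * J1 \<theta>"
proof -
  have lower: "ereal (m / 2) \<le> Bb J1 J2 \<gamma> \<theta>"
    unfolding Bb_partial_energy by (rule INF_greatest) (auto intro: partial_energy_ge)
  define w where "w = (\<lambda>i::nat. if i = 0 then - \<theta> else 0)"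
  have "(0, w) \<in> {(k, v). v (Suc k) = 0 \<and> v (Suc k) - v k = \<theta>}" by (simp add: w_def)
  then have "Bb J1 J2 \<gamma> \<theta> \<le> case_prod (partial_energy J1 J2 \<gamma>) (0, w)"
    unfolding Bb_partial_energy by (rule INF_lower)
  also have "\<dots> = ereal (1/2) * J1 \<theta>" by (simp add: partial_energy_def w_def)
  finally show ?thesis using that lower J1_finite[OF assms] by (cases "Bb J1 J2 \<gamma> \<theta>") auto
qed

lemma Btg_ge: "ereal (m / 2) \<le> Btg J1 J2 \<theta> \<gamma>"
  unfolding Btg_def by (rule INF_greatest) (blast intro: chain_energy_ge)

lemma long_bond:
  assumes "0 < e"
  obtains L where "J1 L < ereal e" "J2 ((a + L) / 2) < ereal e" "J2 ((L + b) / 2) < ereal e"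
proof -
  have small: "eventually (\<lambda>z. J1 z < ereal e) at_top" "eventually (\<lambda>z. J2 z < ereal e) at_top"
    using order_tendstoD(2)[OF J1_lim] order_tendstoD(2)[OF J2_lim] assms by simp_all
  have "eventually (\<lambda>L. J2 ((1/2) * L + a / 2) < ereal e) at_top"
    "eventually (\<lambda>L. J2 ((1/2) * L + b / 2) < ereal e) at_top"
    by (rule eventually_compose_filterlim[OF small(2) filterlim_affine_at_top], simp)+
  then have "eventually (\<lambda>L. J1 L < ereal e \<and> J2 ((a + L) / 2) < ereal e \<and> J2 ((L + b) / 2) < ereal e) at_top"
    using small(1) by eventually_elim (simp add: add_divide_distrib ac_simps)
  then obtain N where "\<forall>L\<ge>N. J1 L < ereal e \<and> J2 ((a + L) / 2) < ereal e \<and> J2 ((L + b) / 2) < ereal e"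
    by (auto simp: eventually_at_top_linorder)
  then show ?thesis using that by blast
qed

(* A boundary chain x and a bulk chain u, glued across a bond L, form a competitor for
   B(theta,gamma); as L -> oo the two bond cells reduce to the surface terms of x and u minus
   twice the bulk energy. *)
lemma glue_bound:
  assumes \<theta>: "0 < \<theta>" and x: "x (Suc k) = 0" "x (Suc k) - x k = \<theta>"
    and u: "u 0 = 0" "\<forall>i\<ge>N. u (i + 1) - u i = \<gamma>"
  shows "Btg J1 J2 \<theta> \<gamma> + ereal (2 * bulk)
    \<le> ereal (1/2) * J1 \<theta> + partial_energy J1 J2 \<gamma> k x + chain_energy J1 J2 \<gamma> u"
proof -
  obtain t where t: "J1 \<theta> = ereal t" using J1_finite[OF \<theta>] J1_not_minf by (cases "J1 \<theta>") auto
  have Eu: "chain_energy J1 J2 \<gamma> u = partial_energy J1 J2 \<gamma> N u"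
    by (rule chain_energy_tail[OF u(2) order_refl])
  show ?thesis
  proof (cases "partial_energy J1 J2 \<gamma> k x = \<infinity> \<or> partial_energy J1 J2 \<gamma> N u = \<infinity>")
    case True
    then show ?thesis using Eu t partial_energy_ge[of k x] partial_energy_ge[of N u] by auto
  next
    case False
    then obtain ra sx rb su
      where ra: "ereal (1/2) * J1 (x 1 - x 0) = ereal ra" and sx: "(\<Sum>i<k. cell J1 J2 \<gamma> x i) = ereal sx"
        and rb: "ereal (1/2) * J1 (u 1 - u 0) = ereal rb" and su: "(\<Sum>j<N. cell J1 J2 \<gamma> u j) = ereal su"
      by (metis partial_energy_finite_parts)
    show ?thesis
    proof (rule ereal_le_epsilon2)
      fix e :: real assume "0 < e"
      then have "0 < e / 3" by simp
      then obtain L where "J1 L < ereal (e / 3)" "J2 ((x 1 - x 0 + L) / 2) < ereal (e / 3)"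
        "J2 ((L + (u 1 - u 0)) / 2) < ereal (e / 3)"
        by (rule long_bond[where a = "x 1 - x 0" and b = "u 1 - u 0"])
      then obtain l p q where l: "J1 L = ereal l" "l < e / 3"
        and p: "J2 ((x 1 - x 0 + L) / 2) = ereal p" "p < e / 3"
        and q: "J2 ((L + (u 1 - u 0)) / 2) = ereal q" "q < e / 3"
        using J1_not_minf J2_not_minf by (metis ereal_bounded_above)
      have "Btg J1 J2 \<theta> \<gamma> \<le> chain_energy J1 J2 \<gamma> (glue_chain k x L u)"
        unfolding Btg_def using glue_chain_start[OF x] glue_chain_tail[of N u, OF u(2)]
        by (intro INF_lower) blast
      also have "\<dots> = ereal (t / 2 + (sx + (p + l / 2 + ra - bulk) + (q + rb + l / 2 - bulk) + su))"
        using glue_chain_energy[OF x u] t ra sx rb su l p q by (simp add: pair_cell_def J0_gamma_eq)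
      finally obtain btg where btg: "Btg J1 J2 \<theta> \<gamma> = ereal btg"
        and "btg \<le> t / 2 + (sx + (p + l / 2 + ra - bulk) + (q + rb + l / 2 - bulk) + su)"
        using Btg_ge[of \<theta>] by (cases "Btg J1 J2 \<theta> \<gamma>") auto
      then have "btg + 2 * bulk \<le> t / 2 + (ra + sx) + (rb + su) + e" using l p q by simp
      then show "Btg J1 J2 \<theta> \<gamma> + ereal (2 * bulk)
          \<le> ereal (1/2) * J1 \<theta> + partial_energy J1 J2 \<gamma> k x + chain_energy J1 J2 \<gamma> u + ereal e"
        using btg t ra sx rb su Eu by (simp add: partial_energy_def)
    qed
  qed
qed

lemma Btg_crack:
  assumes \<theta>: "0 < \<theta>"
  shows "Btg J1 J2 \<theta> \<gamma> + ereal (2 * bulk) \<le> ereal (1/2) * J1 \<theta> + Bb J1 J2 \<gamma> \<theta> + Bg J1 J2 \<gamma>"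
proof -
  obtain t where t: "J1 \<theta> = ereal t" using J1_finite[OF \<theta>] J1_not_minf by (cases "J1 \<theta>") auto
  have "Btg J1 J2 \<theta> \<gamma> + ereal (2 * bulk) \<le> ereal (t / 2)
      + (INF (k, x) \<in> {(k, v). v (Suc k) = 0 \<and> v (Suc k) - v k = \<theta>}. partial_energy J1 J2 \<gamma> k x)
      + (INF u \<in> {v. \<exists>N. v 0 = 0 \<and> (\<forall>i\<ge>N. v (i + 1) - v i = \<gamma>)}. chain_energy J1 J2 \<gamma> u)"
  proof (rule le_INF_add_INF[where b = "m / 2"])
    fix kx and u :: "nat \<Rightarrow> real"
    assume "kx \<in> {(k, v). v (Suc k) = 0 \<and> v (Suc k) - v k = \<theta>}"
      and "u \<in> {v. \<exists>N. v 0 = 0 \<and> (\<forall>i\<ge>N. v (i + 1) - v i = \<gamma>)}"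
    then show "Btg J1 J2 \<theta> \<gamma> + ereal (2 * bulk)
        \<le> ereal (t / 2) + case_prod (partial_energy J1 J2 \<gamma>) kx + chain_energy J1 J2 \<gamma> u"
      using glue_bound[OF \<theta>] t by auto
  qed (use partial_energy_ge in force, use chain_energy_ge in blast)
  then show ?thesis by (simp add: Bb_partial_energy Bg_def t)
qed

(* Joining a chain of B(theta,gamma) with one of B(gamma) yields a competitor for B_b(theta). *)
lemma join_bound:
  assumes v: "v 0 = 0" "v 1 = \<theta>" "\<forall>i\<ge>N1. v (i + 1) - v i = \<gamma>"
    and u: "u 0 = 0" "\<forall>i\<ge>N2. u (i + 1) - u i = \<gamma>"
  shows "ereal (1/2) * J1 \<theta> + Bb J1 J2 \<gamma> \<theta> \<le> chain_energy J1 J2 \<gamma> v + chain_energy J1 J2 \<gamma> u"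
proof -
  define P where "P = N1 + N2"
  have match: "u (P + 1) - u P = v (P + 1) - v P" using u v by (simp add: P_def)
  note join = join_chain_properties[OF match]
  have "(2 * P, join_chain P u v) \<in> {(k, v). v (Suc k) = 0 \<and> v (Suc k) - v k = \<theta>}"
    using join(1,2) v by simp
  then have "Bb J1 J2 \<gamma> \<theta> \<le> partial_energy J1 J2 \<gamma> (2 * P) (join_chain P u v)"
    unfolding Bb_partial_energy by (rule INF_lower2) simp
  then have "ereal (1/2) * J1 \<theta> + Bb J1 J2 \<gamma> \<theta> \<le> ereal (1/2) * J1 \<theta>
      + (ereal (1/2) * J1 (u 1 - u 0) + ((\<Sum>i<P. cell J1 J2 \<gamma> u i) + (\<Sum>i<P. cell J1 J2 \<gamma> v i)))"
    unfolding join(3) by (rule add_left_mono)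
  also have "\<dots> = chain_energy J1 J2 \<gamma> v + chain_energy J1 J2 \<gamma> u"
    using chain_energy_tail[OF v(3), of P] chain_energy_tail[OF u(2), of P] v(1,2)
    by (simp add: partial_energy_def P_def ac_simps)
  finally show ?thesis .
qed

lemma Btg_join: "ereal (1/2) * J1 \<theta> + Bb J1 J2 \<gamma> \<theta> \<le> Btg J1 J2 \<theta> \<gamma> + Bg J1 J2 \<gamma>"
proof -
  have "ereal (1/2) * J1 \<theta> + Bb J1 J2 \<gamma> \<theta> \<le> ereal 0
      + (INF v \<in> {v. \<exists>N. v 0 = 0 \<and> v 1 = \<theta> \<and> (\<forall>i\<ge>N. v (i + 1) - v i = \<gamma>)}. chain_energy J1 J2 \<gamma> v)
      + (INF u \<in> {v. \<exists>N. v 0 = 0 \<and> (\<forall>i\<ge>N. v (i + 1) - v i = \<gamma>)}. chain_energy J1 J2 \<gamma> u)"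
  proof (rule le_INF_add_INF[where b = "m / 2"])
    fix v u :: "nat \<Rightarrow> real"
    assume "v \<in> {v. \<exists>N. v 0 = 0 \<and> v 1 = \<theta> \<and> (\<forall>i\<ge>N. v (i + 1) - v i = \<gamma>)}"
      and "u \<in> {v. \<exists>N. v 0 = 0 \<and> (\<forall>i\<ge>N. v (i + 1) - v i = \<gamma>)}"
    then show "ereal (1/2) * J1 \<theta> + Bb J1 J2 \<gamma> \<theta>
        \<le> ereal 0 + chain_energy J1 J2 \<gamma> v + chain_energy J1 J2 \<gamma> u"
      using join_bound by (simp only: mem_Collect_eq zero_ereal_def[symmetric] add_0_left) blast
  qed (use chain_energy_ge in blast)+
  then show ?thesis by (simp add: Btg_def Bg_def)
qed

(* Under the smallness condition on J2, continuing a near-optimal boundary chain by the perfect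
   lattice saves the bond J1(gamma)/2 + J2(...) <= 0: B(theta,gamma) <= J1(theta)/2 + B_b(theta) - J0(gamma). *)
lemma Btg_strict:
  assumes \<theta>: "0 < \<theta>" and \<eta>: "0 < \<eta>"
    and cond: "\<And>t. J1 t < J1 \<theta> + ereal (2 * \<eta>) \<Longrightarrow> ereal (1/2) * J1 \<gamma> + J2 ((t + \<gamma>) / 2) \<le> 0"
  shows "Btg J1 J2 \<theta> \<gamma> + ereal bulk \<le> ereal (1/2) * J1 \<theta> + Bb J1 J2 \<gamma> \<theta>"
proof (rule ereal_le_epsilon2)
  fix e :: real assume e: "0 < e"
  obtain t where t: "J1 \<theta> = ereal t" using J1_finite[OF \<theta>] J1_not_minf by (cases "J1 \<theta>") auto
  obtain bb where bb: "Bb J1 J2 \<gamma> \<theta> = ereal bb" "ereal bb \<le> ereal (1/2) * J1 \<theta>"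
    using Bb_bounds[OF \<theta>] by metis
  obtain j1 where j1: "J1 \<gamma> = ereal j1" using gamma_values_finite by metis
  have "Bb J1 J2 \<gamma> \<theta> < ereal (bb + min e \<eta>)" using bb e \<eta> by simp
  then obtain k x where x: "x (Suc k) = 0" "x (Suc k) - x k = \<theta>"
    and small: "partial_energy J1 J2 \<gamma> k x < ereal (bb + min e \<eta>)"
    unfolding Bb_partial_energy by (auto simp: INF_less_iff)
  have "partial_energy J1 J2 \<gamma> k x \<noteq> \<infinity>" using small by auto
  then obtain ra sx where ra: "ereal (1/2) * J1 (x 1 - x 0) = ereal ra"
    and sx: "(\<Sum>i<k. cell J1 J2 \<gamma> x i) = ereal sx" "0 \<le> sx"
    by (rule partial_energy_finite_parts)
  have ra_sx: "ra + sx < bb + min e \<eta>" using small ra sx by (simp add: partial_energy_def)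
  have "J1 (x 1 - x 0) = ereal (2 * ra)" using ra J1_not_minf by (cases "J1 (x 1 - x 0)") auto
  then have "J1 (x 1 - x 0) < J1 \<theta> + ereal (2 * \<eta>)" using ra_sx sx bb t by simp
  then have "ereal (1/2) * J1 \<gamma> + J2 ((x 1 - x 0 + \<gamma>) / 2) \<le> 0" by (rule cond)
  then obtain p where p: "J2 ((x 1 - x 0 + \<gamma>) / 2) = ereal p" "j1 / 2 + p \<le> 0"
    using j1 J2_not_minf by (cases "J2 ((x 1 - x 0 + \<gamma>) / 2)") auto
  have "Btg J1 J2 \<theta> \<gamma> \<le> chain_energy J1 J2 \<gamma> (glue_chain k x \<gamma> (uniform_chain \<gamma>))"
    unfolding Btg_def using glue_chain_start[OF x] glue_chain_tail[OF uniform_chain_tail]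
    by (intro INF_lower) blast
  also have "\<dots> = ereal (t / 2 + (sx + (p + j1 / 2 + ra - bulk)))"
    using glue_chain_energy[OF x uniform_chain_start(1) uniform_chain_tail] uniform_chain_start(2)
      pair_cell_gamma t ra sx p j1 by (simp add: pair_cell_def J0_gamma_eq)
  finally obtain btg where "Btg J1 J2 \<theta> \<gamma> = ereal btg" "btg \<le> t / 2 + (sx + (p + j1 / 2 + ra - bulk))"
    using Btg_ge[of \<theta>] by (cases "Btg J1 J2 \<theta> \<gamma>") auto
  then show "Btg J1 J2 \<theta> \<gamma> + ereal bulk \<le> ereal (1/2) * J1 \<theta> + Bb J1 J2 \<gamma> \<theta> + ereal e"
    using t bb p ra_sx by simp
qed

theorem boundary_layer_estimates:
  "(\<forall>\<theta>>0. Btg J1 J2 \<theta> \<gamma> \<le> BBJ J1 J2 \<gamma> \<theta> \<and> BBJ J1 J2 \<gamma> \<theta> \<le> Btg J1 J2 \<theta> \<gamma> + BIJ J1 J2 \<gamma>)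
    \<and> BIJ J1 J2 \<gamma> > 0
    \<and> (\<forall>\<theta>>0. (\<exists>\<eta>>0. \<forall>t. J1 t < J1 \<theta> + ereal (2 * \<eta>) \<longrightarrow>
                 ereal (1/2) * J1 \<gamma> + J2 ((t + \<gamma>) / 2) \<le> 0)
          \<longrightarrow> Btg J1 J2 \<theta> \<gamma> < BBJ J1 J2 \<gamma> \<theta>)"
proof -
  obtain bg where bg: "Bg J1 J2 \<gamma> = ereal bg" "m / 2 \<le> bg" by (rule Bg_finite)
  have estimates: "Btg J1 J2 \<theta> \<gamma> \<le> BBJ J1 J2 \<gamma> \<theta> \<and> BBJ J1 J2 \<gamma> \<theta> \<le> Btg J1 J2 \<theta> \<gamma> + BIJ J1 J2 \<gamma>
      \<and> ((\<exists>\<eta>>0. \<forall>t. J1 t < J1 \<theta> + ereal (2 * \<eta>) \<longrightarrow> ereal (1/2) * J1 \<gamma> + J2 ((t + \<gamma>) / 2) \<le> 0)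
          \<longrightarrow> Btg J1 J2 \<theta> \<gamma> < BBJ J1 J2 \<gamma> \<theta>)" if \<theta>: "0 < \<theta>" for \<theta>
  proof -
    obtain t where t: "J1 \<theta> = ereal t" using J1_finite[OF \<theta>] J1_not_minf by (cases "J1 \<theta>") auto
    obtain bb where bb: "Bb J1 J2 \<gamma> \<theta> = ereal bb" using Bb_bounds[OF \<theta>] by metis
    have crack: "Btg J1 J2 \<theta> \<gamma> + ereal (2 * bulk) \<le> ereal (t / 2 + bb + bg)"
      using Btg_crack[OF \<theta>] by (simp add: t bb bg)
    then obtain btg where btg: "Btg J1 J2 \<theta> \<gamma> = ereal btg" "btg + 2 * bulk \<le> t / 2 + bb + bg"
      using Btg_ge[of \<theta>] by (cases "Btg J1 J2 \<theta> \<gamma>") auto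
    have join: "t / 2 + bb \<le> btg + bg" using Btg_join[of \<theta>] by (simp add: t bb bg btg)
    have strict: "btg + bulk \<le> t / 2 + bb"
      if "\<exists>\<eta>>0. \<forall>t. J1 t < J1 \<theta> + ereal (2 * \<eta>) \<longrightarrow> ereal (1/2) * J1 \<gamma> + J2 ((t + \<gamma>) / 2) \<le> 0"
      using that Btg_strict[OF \<theta>] by (auto simp: t bb btg)
    have BBJ: "BBJ J1 J2 \<gamma> \<theta> = ereal (t / 2 + bb + bg - 2 * bulk)"
      by (simp add: BBJ_def J0_gamma_eq t bb bg)
    have BIJ: "BIJ J1 J2 \<gamma> = ereal (2 * bg - 2 * bulk)" by (simp add: BIJ_def J0_gamma_eq bg)
    show ?thesis
      unfolding BBJ BIJ btg(1) using btg(2) join strict bulk_less bg(2) by (intro conjI impI) simp_all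
  qed
  show ?thesis using estimates BIJ_pos by blast
qed

end

(* [LJ1]-[LJ4] provide the reduced hypotheses with m = J1(delta1). *)
theorem lemma5p5:
  fixes J1 J2 :: "real \<Rightarrow> ereal" and \<gamma> :: real
  assumes noninf1: "\<forall>z. J1 z \<noteq> -\<infinity>" and noninf2: "\<forall>z. J2 z \<noteq> -\<infinity>"
  \<comment> \<open>[LJ1]\<close>
  assumes LJ1: "{z. J0 J1 J2 z = biconj (J0 J1 J2) z} \<inter> {z. locally_affine_at (J0 J1 J2) z} = {}"
  \<comment> \<open>[LJ2] (for z in the domain of J0)\<close>
  assumes LJ2: "\<forall>z. J0 J1 J2 z = biconj (J0 J1 J2) z \<and> J0 J1 J2 z < \<infinity> \<longrightarrow>
      (\<exists>!p. fst p + snd p = 2 * z \<and> J0 J1 J2 z = J2 z + ereal (1/2) * (J1 (fst p) + J1 (snd p)))"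
  \<comment> \<open>[LJ3]\<close>
  assumes LJ3: "\<exists>\<alpha>. 0 < \<alpha> \<and> \<alpha> \<le> 1 \<and> C1alpha_on_dom \<alpha> J1 \<and> C1alpha_on_dom \<alpha> J2"
    and LJ3_C1: "C1_on_dom (J0 J1 J2)"
    and LJ3_dom: "edom J1 = edom J2" "{0<..} \<subseteq> edom J1"
    and LJ3_lim1: "(J1 \<longlongrightarrow> 0) at_top" and LJ3_lim2: "(J2 \<longlongrightarrow> 0) at_top"
    and LJ3_lim0: "((J0 J1 J2) \<longlongrightarrow> ereal J0inf) at_top"
  \<comment> \<open>[LJ4]\<close>
  assumes LJ4_Psi: "\<exists>\<Psi> :: real \<Rightarrow> ereal. (\<forall>z. 0 \<le> \<Psi> z) \<and> ereal_convex \<Psi>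
      \<and> ((\<lambda>z. \<Psi> z / ereal \<bar>z\<bar>) \<longlongrightarrow> \<infinity>) at_bot
      \<and> (\<exists>c1 c2. c1 > 0 \<and> c2 > 0 \<and>
          (\<forall>z. ereal c1 * (\<Psi> z - 1) \<le> J1 z \<and> J1 z \<le> ereal c2 * max (\<Psi> z) (ereal \<bar>z\<bar>)
             \<and> ereal c1 * (\<Psi> z - 1) \<le> J2 z \<and> J2 z \<le> ereal c2 * max (\<Psi> z) (ereal \<bar>z\<bar>)))"
    and LJ4_delta1: "\<exists>\<delta>1>0. (\<forall>z. J1 \<delta>1 \<le> J1 z \<and> (J1 z = J1 \<delta>1 \<longrightarrow> z = \<delta>1))
                        \<and> strictly_convex_on_set ({..<\<delta>1} \<inter> edom J1) J1"
    and LJ4_delta2: "\<exists>\<delta>2>0. (\<forall>z. J2 \<delta>2 \<le> J2 z \<and> (J2 z = J2 \<delta>2 \<longrightarrow> z = \<delta>2))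
                        \<and> strictly_convex_on_set ({..<\<delta>2} \<inter> edom J2) J2"
    and LJ4_gamma: "\<gamma> > 0" "\<forall>z. J0 J1 J2 \<gamma> \<le> J0 J1 J2 z \<and> (J0 J1 J2 z = J0 J1 J2 \<gamma> \<longrightarrow> z = \<gamma>)"
    and LJ4_less: "J0 J1 J2 \<gamma> < ereal J0inf"
    and LJ4_conv: "\<forall>z\<le>\<gamma>. J0 J1 J2 z = biconj (J0 J1 J2) z"
  shows "(\<forall>\<theta>>0. Btg J1 J2 \<theta> \<gamma> \<le> BBJ J1 J2 \<gamma> \<theta> \<and> BBJ J1 J2 \<gamma> \<theta> \<le> Btg J1 J2 \<theta> \<gamma> + BIJ J1 J2 \<gamma>)
    \<and> BIJ J1 J2 \<gamma> > 0
    \<and> (\<forall>\<theta>>0. (\<exists>\<eta>>0. \<forall>t. J1 t < J1 \<theta> + ereal (2 * \<eta>) \<longrightarrow>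
                 ereal (1/2) * J1 \<gamma> + J2 ((t + \<gamma>) / 2) \<le> 0)
          \<longrightarrow> Btg J1 J2 \<theta> \<gamma> < BBJ J1 J2 \<gamma> \<theta>)"
proof -
  have finite_pos: "J1 z \<noteq> \<infinity>" if "0 < z" for z
    using LJ3_dom(2) that by (auto simp: edom_def)
  obtain \<delta>1 where \<delta>1: "0 < \<delta>1" "\<forall>z. J1 \<delta>1 \<le> J1 z" using LJ4_delta1 by blast
  obtain m where m: "J1 \<delta>1 = ereal m"
    using finite_pos[OF \<delta>1(1)] noninf1 by (cases "J1 \<delta>1") auto
  have "J0 J1 J2 \<gamma> < \<infinity>" using LJ4_less by (metis ereal_less_PInfty less_trans)
  then have "J0 J1 J2 \<gamma> = J2 \<gamma> + J1 \<gamma>"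
    using LJ2 LJ4_conv by (intro J0_unique_split_diagonal) simp
  moreover have "ereal J0inf \<le> ereal (m / 2)"
    using J0_limit_le_half_J1[OF LJ3_lim1 LJ3_lim2 LJ3_lim0, of \<delta>1] m by simp
  then have "J0 J1 J2 \<gamma> < ereal (m / 2)" using LJ4_less by (rule order.strict_trans2[rotated])
  moreover have "ereal m \<le> J1 z" for z using \<delta>1(2) m by metis
  ultimately interpret boundary_setting J1 J2 \<gamma> m
    using noninf2 finite_pos LJ4_gamma(2) LJ3_lim1 LJ3_lim2 by unfold_locales simp_all
  show ?thesis by (rule boundary_layer_estimates)
qed

end
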